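(* There is no graph $H$ on five vertices such that every $H$-free graph $G$ is $(\chi(G)+1)$-mixing.
   Context: All graphs are finite and simple. $\chi(G)$ is the chromatic number. The reconfiguration graph $\mathcal{R}_k(G)$ has the proper $k$-colourings of $G$ (colours $\{1,\dots,k\}$) as vertices, two being adjacent if they differ on exactly one vertex; $G$ is $k$-mixing if $\mathcal{R}_k(G)$ is connected. $G$ is $H$-free if it has no induced subgraph isomorphic to $H$. *)

theory Defs
  imports Main
begin

definition simple_graph :: "'a set \<Rightarrow> ('a \<Rightarrow> 'a \<Rightarrow> bool) \<Rightarrow> bool" where
  "simple_graph V E \<longleftrightarrow> finite V \<and> (\<forall>u v. E u v \<longrightarrow> u \<in> V \<and> v \<in> V)
     \<and> (\<forall>u v. E u v \<longrightarrow> E v u) \<and> (\<forall>v. \<not> E v v)"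

definition induced_sub :: "'b set \<Rightarrow> ('b \<Rightarrow> 'b \<Rightarrow> bool) \<Rightarrow> 'a set \<Rightarrow> ('a \<Rightarrow> 'a \<Rightarrow> bool) \<Rightarrow> bool" where
  "induced_sub VH EH VG EG \<longleftrightarrow> (\<exists>f. inj_on f VH \<and> f ` VH \<subseteq> VG \<and>
      (\<forall>u\<in>VH. \<forall>v\<in>VH. EH u v \<longleftrightarrow> EG (f u) (f v)))"

definition H_free :: "'b set \<Rightarrow> ('b \<Rightarrow> 'b \<Rightarrow> bool) \<Rightarrow> 'a set \<Rightarrow> ('a \<Rightarrow> 'a \<Rightarrow> bool) \<Rightarrow> bool" where
  "H_free VH EH VG EG \<longleftrightarrow> \<not> induced_sub VH EH VG EG"

text \<open>Proper k-colourings with colours {1..k}; as functions they are normalised to 0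
outside V, so that they correspond bijectively to maps V -> {1..k}.\<close>
definition proper_colouring :: "'a set \<Rightarrow> ('a \<Rightarrow> 'a \<Rightarrow> bool) \<Rightarrow> nat \<Rightarrow> ('a \<Rightarrow> nat) \<Rightarrow> bool" where
  "proper_colouring V E k c \<longleftrightarrow> (\<forall>v\<in>V. c v \<in> {1..k}) \<and> (\<forall>v. v \<notin> V \<longrightarrow> c v = 0)
     \<and> (\<forall>u v. E u v \<longrightarrow> c u \<noteq> c v)"

definition chromatic_number :: "'a set \<Rightarrow> ('a \<Rightarrow> 'a \<Rightarrow> bool) \<Rightarrow> nat" where
  "chromatic_number V E = (LEAST k. \<exists>c. proper_colouring V E k c)"

definition recolour_adj :: "'a set \<Rightarrow> ('a \<Rightarrow> 'a \<Rightarrow> bool) \<Rightarrow> nat \<Rightarrow> ('a \<Rightarrow> nat) \<Rightarrow> ('a \<Rightarrow> nat) \<Rightarrow> bool" where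
  "recolour_adj V E k c c' \<longleftrightarrow> proper_colouring V E k c \<and> proper_colouring V E k c'
     \<and> card {v \<in> V. c v \<noteq> c' v} = 1"

definition k_mixing :: "'a set \<Rightarrow> ('a \<Rightarrow> 'a \<Rightarrow> bool) \<Rightarrow> nat \<Rightarrow> bool" where
  "k_mixing V E k \<longleftrightarrow> (\<forall>c c'. proper_colouring V E k c \<and> proper_colouring V E k c'
     \<longrightarrow> (recolour_adj V E k)\<^sup>*\<^sup>* c c')"

end

theory Submission
  imports Defs "HOL-Number_Theory.Cong"
begin

text \<open>The 6-cycle has chromatic number 2, and its 3-colouring \<open>v \<mapsto> v mod 3 + 1\<close> is frozen:
every vertex already sees both other colours, so no single vertex can be recoloured and the
colouring is an isolated vertex of \<open>R\<^sub>3(C\<^sub>6)\<close>. Likewise a certain 10-vertex graph of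
chromatic number 4 carries a frozen 5-colouring. Neither graph is \<open>(\<chi> + 1)\<close>-mixing, so a
5-vertex \<open>H\<close> as in the statement would be an induced subgraph of both. Deleting a vertex from
\<open>C\<^sub>6\<close> leaves an induced \<open>P\<^sub>5\<close>, so \<open>H = P\<^sub>5\<close>; but the 10-vertex graph is \<open>P\<^sub>5\<close>-free.\<close>

definition induced_embedding ::
    "('b \<Rightarrow> 'a) \<Rightarrow> 'b set \<Rightarrow> ('b \<Rightarrow> 'b \<Rightarrow> bool) \<Rightarrow> 'a set \<Rightarrow> ('a \<Rightarrow> 'a \<Rightarrow> bool) \<Rightarrow> bool" where
  "induced_embedding f VH EH VG EG \<longleftrightarrow> inj_on f VH \<and> f ` VH \<subseteq> VG \<and>
      (\<forall>u\<in>VH. \<forall>v\<in>VH. EH u v \<longleftrightarrow> EG (f u) (f v))"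

lemma induced_sub_iff_embedding:
  "induced_sub VH EH VG EG \<longleftrightarrow> (\<exists>f. induced_embedding f VH EH VG EG)"
  unfolding induced_sub_def induced_embedding_def ..

lemma induced_embedding_comp:
  assumes "induced_embedding f VH EH VG EG" and "induced_embedding g VG EG VK EK"
  shows "induced_embedding (g \<circ> f) VH EH VK EK"
  using assms unfolding induced_embedding_def
  by (auto simp: comp_inj_on image_subset_iff inj_on_subset)

lemma induced_sub_trans:
  "induced_sub VH EH VG EG \<Longrightarrow> induced_sub VG EG VK EK \<Longrightarrow> induced_sub VH EH VK EK"
  unfolding induced_sub_iff_embedding by (metis induced_embedding_comp)

lemma induced_embedding_factor:
  assumes f: "induced_embedding f VH EH VG EG" and p: "induced_embedding p VP EP VG EG"
    and image: "p ` VP \<subseteq> f ` VH"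
  shows "induced_embedding (inv_into VH f \<circ> p) VP EP VH EH"
proof -
  have f_adj: "\<forall>u\<in>VH. \<forall>v\<in>VH. EH u v \<longleftrightarrow> EG (f u) (f v)"
    using f unfolding induced_embedding_def by auto
  have pullback: "inv_into VH f (p x) \<in> VH" "f (inv_into VH f (p x)) = p x" if "x \<in> VP" for x
  proof -
    have "p x \<in> f ` VH" using image that by blast
    then show "inv_into VH f (p x) \<in> VH" "f (inv_into VH f (p x)) = p x"
      by (simp_all add: inv_into_into f_inv_into_f)
  qed
  have "inj_on (inv_into VH f \<circ> p) VP"
  proof (rule comp_inj_on)
    show "inj_on p VP" using p unfolding induced_embedding_def by blast
    show "inj_on (inv_into VH f) (p ` VP)" using image by (rule inj_on_inv_into)
  qed
  moreover have "EP x y \<longleftrightarrow> EH (inv_into VH f (p x)) (inv_into VH f (p y))"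
    if "x \<in> VP" "y \<in> VP" for x y
    using p that pullback f_adj unfolding induced_embedding_def by simp
  ultimately show ?thesis
    using pullback unfolding induced_embedding_def by auto
qed

definition frozen_colouring :: "'a set \<Rightarrow> ('a \<Rightarrow> 'a \<Rightarrow> bool) \<Rightarrow> nat \<Rightarrow> ('a \<Rightarrow> nat) \<Rightarrow> bool" where
  "frozen_colouring V E k c \<longleftrightarrow> proper_colouring V E k c \<and>
      (\<forall>v\<in>V. \<forall>x\<in>{1..k}. x \<noteq> c v \<longrightarrow> (\<exists>u. E v u \<and> c u = x))"

lemma frozen_colouring_no_recolouring:
  assumes "frozen_colouring V E k c"
  shows "\<not> recolour_adj V E k c c'"
proof
  assume "recolour_adj V E k c c'"
  then have c'_proper: "proper_colouring V E k c'" and "card {v\<in>V. c v \<noteq> c' v} = 1"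
    unfolding recolour_adj_def by auto
  then obtain w where diff: "{v\<in>V. c v \<noteq> c' v} = {w}" by (auto simp: card_1_singleton_iff)
  then have "w \<in> V" and "c' w \<noteq> c w" by auto
  moreover have "c' w \<in> {1..k}" using c'_proper \<open>w \<in> V\<close> unfolding proper_colouring_def by auto
  ultimately obtain u where "E w u" and "c u = c' w"
    using assms unfolding frozen_colouring_def by blast
  have "u \<in> V"
  proof (rule ccontr)
    assume "u \<notin> V"
    then have "c u = 0" using assms unfolding frozen_colouring_def proper_colouring_def by blast
    then show False using \<open>c u = c' w\<close> \<open>c' w \<in> {1..k}\<close> by simp
  qed
  moreover have "u \<noteq> w" using \<open>c u = c' w\<close> \<open>c' w \<noteq> c w\<close> by auto
  ultimately have "c' u = c u" using diff by (metis (mono_tags, lifting) mem_Collect_eq singletonD)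
  moreover have "c' w \<noteq> c' u"
    using \<open>E w u\<close> c'_proper unfolding proper_colouring_def by blast
  ultimately show False using \<open>c u = c' w\<close> by simp
qed

lemma frozen_colouring_not_k_mixing:
  assumes "frozen_colouring V E k c" and "proper_colouring V E k c'" and "c' \<noteq> c"
  shows "\<not> k_mixing V E k"
proof
  assume "k_mixing V E k"
  then have "(recolour_adj V E k)\<^sup>*\<^sup>* c c'"
    using assms(1,2) unfolding k_mixing_def frozen_colouring_def by blast
  then show False
    using assms(3) frozen_colouring_no_recolouring[OF assms(1)]
    by (cases rule: converse_rtranclpE) auto
qed

definition clique :: "('a \<Rightarrow> 'a \<Rightarrow> bool) \<Rightarrow> 'a set \<Rightarrow> bool" where
  "clique E K \<longleftrightarrow> (\<forall>u\<in>K. \<forall>v\<in>K. u \<noteq> v \<longrightarrow> E u v)"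

lemma clique_card_le_colours:
  assumes "proper_colouring V E k c" and "clique E K" and "K \<subseteq> V"
  shows "card K \<le> k"
proof -
  have "inj_on c K"
    using assms unfolding proper_colouring_def clique_def inj_on_def by blast
  moreover have "c ` K \<subseteq> {1..k}"
    using assms unfolding proper_colouring_def by auto
  ultimately show ?thesis
    using card_inj_on_le[of c K "{1..k}"] by simp
qed

lemma chromatic_number_eqI:
  assumes "proper_colouring V E k c" and "clique E K" and "K \<subseteq> V" and "card K = k"
  shows "chromatic_number V E = k"
  unfolding chromatic_number_def
proof (rule Least_equality)
  show "\<exists>c. proper_colouring V E k c" using assms(1) by blast
  show "k \<le> j" if "\<exists>c. proper_colouring V E j c" for j
    using that clique_card_le_colours assms(2-4) by blast
qed

lemma proper_colouring_mono:
  "proper_colouring V E k c \<Longrightarrow> k \<le> k' \<Longrightarrow> proper_colouring V E k' c"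
  unfolding proper_colouring_def by auto

definition path_adj :: "nat \<Rightarrow> nat \<Rightarrow> nat \<Rightarrow> bool" where
  "path_adj n u v \<longleftrightarrow> u < n \<and> v < n \<and> (v = Suc u \<or> u = Suc v)"

definition cycle_adj :: "nat \<Rightarrow> nat \<Rightarrow> nat \<Rightarrow> bool" where
  "cycle_adj n u v \<longleftrightarrow> u < n \<and> v < n \<and> (v = Suc u mod n \<or> u = Suc v mod n)"

lemma simple_graph_cycle: "2 \<le> n \<Longrightarrow> simple_graph {0..<n} (cycle_adj n)"
  unfolding simple_graph_def cycle_adj_def by (auto simp: mod_Suc)

lemma cycle_adj_iff:
  "cycle_adj n u v \<longleftrightarrow> u < n \<and> v < n \<and>
     (v = Suc u \<or> u = Suc v \<or> (u = 0 \<and> Suc v = n) \<or> (v = 0 \<and> Suc u = n))"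
  unfolding cycle_adj_def by (auto simp: mod_Suc)

lemma proper_colouring_cycle_parity:
  assumes "even n"
  shows "proper_colouring {0..<n} (cycle_adj n) 2 (\<lambda>v. if v < n then v mod 2 + 1 else 0)"
proof -
  have "u mod 2 \<noteq> v mod 2" if "cycle_adj n u v" for u v
    using that assms unfolding cycle_adj_iff by (elim conjE disjE) presburger+
  then show ?thesis
    unfolding proper_colouring_def by (auto simp: cycle_adj_def)
qed

lemma other_residues_mod3:
  fixes v x :: nat
  assumes "x \<in> {1..3}" and "x \<noteq> v mod 3 + 1"
  shows "x = Suc v mod 3 + 1 \<or> x = (v + 2) mod 3 + 1"
proof -
  have "Suc v mod 3 = Suc (v mod 3) mod 3" by (simp add: mod_Suc_eq)
  moreover have "(v + 2) mod 3 = (v mod 3 + 2) mod 3" by (simp only: mod_add_left_eq)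
  moreover have "v mod 3 = 0 \<or> v mod 3 = 1 \<or> v mod 3 = 2" by linarith
  ultimately show ?thesis using assms by (elim disjE) (simp_all, presburger+)
qed

lemma frozen_colouring_cycle_mod3:
  assumes "3 dvd n"
  shows "frozen_colouring {0..<n} (cycle_adj n) 3 (\<lambda>v. if v < n then v mod 3 + 1 else 0)"
    (is "frozen_colouring _ _ _ ?c")
  unfolding frozen_colouring_def
proof (intro conjI ballI impI)
  have "u mod 3 \<noteq> v mod 3" if "cycle_adj n u v" for u v
    using that assms unfolding cycle_adj_iff by (elim conjE disjE) presburger+
  then show "proper_colouring {0..<n} (cycle_adj n) 3 ?c"
    unfolding proper_colouring_def by (auto simp: cycle_adj_def)
next
  fix v x assume "v \<in> {0..<n}" and "x \<in> {1..3}" and "x \<noteq> ?c v"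
  then have "v < n" and "x = Suc v mod 3 + 1 \<or> x = (v + 2) mod 3 + 1"
    using other_residues_mod3 by auto
  obtain q where "n = 3 * q" using assms by blast
  with \<open>v < n\<close> have "v + (n - 1) = v + 2 + 3 * (q - 1)" by (cases q) auto
  then have pred_mod3: "(v + (n - 1)) mod 3 = (v + 2) mod 3" by (simp only: mod_mult_self2)
  define succ pred where "succ = Suc v mod n" and "pred = (v + (n - 1)) mod n"
  have "cycle_adj n v succ" and "?c succ = Suc v mod 3 + 1"
    using \<open>v < n\<close> assms by (auto simp: succ_def cycle_adj_def mod_mod_cancel)
  moreover have "cycle_adj n v pred"
  proof -
    have "Suc pred mod n = v"
      using \<open>v < n\<close> unfolding pred_def by (simp add: mod_Suc_eq)
    then show ?thesis using \<open>v < n\<close> by (auto simp: pred_def cycle_adj_def)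
  qed
  moreover have "?c pred = (v + 2) mod 3 + 1"
    using \<open>v < n\<close> assms pred_mod3 by (auto simp: pred_def mod_mod_cancel)
  ultimately show "\<exists>u. cycle_adj n v u \<and> ?c u = x"
    using \<open>x = Suc v mod 3 + 1 \<or> x = (v + 2) mod 3 + 1\<close> by metis
qed

lemma chromatic_number_cycle_even:
  assumes "even n" and "2 \<le> n"
  shows "chromatic_number {0..<n} (cycle_adj n) = 2"
  using chromatic_number_eqI[OF proper_colouring_cycle_parity[OF \<open>even n\<close>], of "{0, 1}"] assms
  by (auto simp: clique_def cycle_adj_iff)

lemma cycle_not_chromatic_plus_one_mixing:
  assumes "6 dvd n" and "0 < n"
  shows "\<not> k_mixing {0..<n} (cycle_adj n) (chromatic_number {0..<n} (cycle_adj n) + 1)"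
proof -
  have "even n" and "3 dvd n" and "6 \<le> n"
    using assms by (auto dest: dvd_imp_le intro: dvd_trans[of _ 6 n])
  then have "chromatic_number {0..<n} (cycle_adj n) + 1 = 3"
    by (simp add: chromatic_number_cycle_even)
  moreover have "(\<lambda>v. if v < n then v mod 2 + 1 else 0) \<noteq> (\<lambda>v. if v < n then v mod 3 + 1 else 0)"
    using \<open>6 \<le> n\<close> by (auto dest: fun_cong[of _ _ 2])
  ultimately show ?thesis
    using frozen_colouring_not_k_mixing[OF frozen_colouring_cycle_mod3[OF \<open>3 dvd n\<close>]
        proper_colouring_mono[OF proper_colouring_cycle_parity[OF \<open>even n\<close>]]]
    by simp
qed

lemma subset_card_Suc_eq_Diff_singleton:
  assumes "S \<subseteq> A" and "finite A" and "card A = Suc (card S)"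
  obtains i where "i \<in> A" and "S = A - {i}"
proof -
  have "card (A - S) = 1"
    using assms by (simp add: card_Diff_subset finite_subset)
  then obtain i where "A - S = {i}" by (auto simp: card_1_singleton_iff)
  then show ?thesis using that \<open>S \<subseteq> A\<close> by blast
qed

lemma cycle_rotation_induced_path:
  fixes m i :: nat
  defines "r \<equiv> \<lambda>j. (i + 1 + j) mod Suc m"
  assumes "i < Suc m"
  shows "induced_embedding r {0..<m} (path_adj m) {0..<Suc m} (cycle_adj (Suc m))"
    and "r ` {0..<m} \<subseteq> {0..<Suc m} - {i}"
proof -
  have r_eq_iff: "r j = r j' \<longleftrightarrow> j = j'" if "j < Suc m" "j' < Suc m" for j j'
    using that cong_add_lcancel_nat[of "i + 1" j j' "Suc m"] cong_less_modulus_unique_nat[of j j' "Suc m"]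
    unfolding r_def cong_def by auto
  have r_Suc: "Suc (r j) mod Suc m = r (Suc j)" for j
    unfolding r_def by (simp add: mod_Suc_eq)
  have "cycle_adj (Suc m) (r j) (r j') \<longleftrightarrow> path_adj m j j'" if "j < m" "j' < m" for j j'
    using that r_eq_iff[of j' "Suc j"] r_eq_iff[of j "Suc j'"]
    unfolding cycle_adj_def path_adj_def r_Suc by (auto simp: r_def)
  moreover have "inj_on r {0..<m}"
    using r_eq_iff by (auto intro: inj_onI)
  ultimately show "induced_embedding r {0..<m} (path_adj m) {0..<Suc m} (cycle_adj (Suc m))"
    unfolding induced_embedding_def by (auto simp: r_def)
  have "r m = (i + Suc m) mod Suc m" unfolding r_def by simp
  also have "\<dots> = i" using \<open>i < Suc m\<close> by (simp only: mod_add_self2 mod_less)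
  finally show "r ` {0..<m} \<subseteq> {0..<Suc m} - {i}"
    using r_eq_iff[of _ m] by (auto simp: r_def)
qed

lemma induced_path_in_cycle_subgraph:
  assumes "induced_sub VH EH {0..<Suc m} (cycle_adj (Suc m))" and "card VH = m"
  shows "induced_sub {0..<m} (path_adj m) VH EH"
proof -
  obtain f where f: "induced_embedding f VH EH {0..<Suc m} (cycle_adj (Suc m))"
    using assms(1) unfolding induced_sub_iff_embedding by blast
  then have "card {0..<Suc m} = Suc (card (f ` VH))" and "f ` VH \<subseteq> {0..<Suc m}"
    using assms(2) unfolding induced_embedding_def by (auto simp: card_image)
  then obtain i where "i \<in> {0..<Suc m}" and image: "f ` VH = {0..<Suc m} - {i}"
    by (metis subset_card_Suc_eq_Diff_singleton finite_atLeastLessThan)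
  then have "i < Suc m" by simp
  show ?thesis
    unfolding induced_sub_iff_embedding
    using induced_embedding_factor[OF f cycle_rotation_induced_path(1)[OF \<open>i < Suc m\<close>]]
      cycle_rotation_induced_path(2)[OF \<open>i < Suc m\<close>] image
    by blast
qed

definition g10_nbrs :: "nat list list" where
  "g10_nbrs = [[2, 4, 6, 7, 8, 9], [2, 4, 5, 7, 8, 9], [0, 1, 3, 4, 8, 9], [2, 4, 5, 6, 7, 9],
    [0, 1, 2, 3, 5, 6], [1, 3, 4, 6, 7, 8], [0, 3, 4, 5, 7, 8], [0, 1, 3, 5, 6, 9],
    [0, 1, 2, 5, 6, 9], [0, 1, 2, 3, 7, 8]]"

definition g10_adj :: "nat \<Rightarrow> nat \<Rightarrow> bool" where
  "g10_adj u v \<longleftrightarrow> u < 10 \<and> v \<in> set (g10_nbrs ! u)"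

definition g10_colouring4 :: "nat \<Rightarrow> nat" where
  "g10_colouring4 v = (if v < 10 then [1, 1, 2, 1, 3, 2, 4, 3, 3, 4] ! v else 0)"

definition g10_colouring5 :: "nat \<Rightarrow> nat" where
  "g10_colouring5 v = (if v < 10 then v mod 5 + 1 else 0)"

lemma atLeast0LessThan_10_enum: "{0..<10} = {0, 1, 2, 3, 4, 5, 6, 7, 8, 9 :: nat}"
  by (auto simp: atLeast0LessThan)

lemma g10_nbrs_nth:
  "g10_nbrs ! 0 = [2, 4, 6, 7, 8, 9]" "g10_nbrs ! 1 = [2, 4, 5, 7, 8, 9]"
  "g10_nbrs ! 2 = [0, 1, 3, 4, 8, 9]" "g10_nbrs ! 3 = [2, 4, 5, 6, 7, 9]"
  "g10_nbrs ! 4 = [0, 1, 2, 3, 5, 6]" "g10_nbrs ! 5 = [1, 3, 4, 6, 7, 8]"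
  "g10_nbrs ! 6 = [0, 3, 4, 5, 7, 8]" "g10_nbrs ! 7 = [0, 1, 3, 5, 6, 9]"
  "g10_nbrs ! 8 = [0, 1, 2, 5, 6, 9]" "g10_nbrs ! 9 = [0, 1, 2, 3, 7, 8]"
  "g10_nbrs ! Suc 0 = [2, 4, 5, 7, 8, 9]" \<comment> \<open>the simplifier may present the index 1 as \<open>Suc 0\<close>\<close>
  by (simp_all add: g10_nbrs_def)

lemmas g10_eval = atLeast0LessThan_10_enum g10_nbrs_nth g10_colouring4_def g10_colouring5_def

lemma g10_adj_bounded_sym_irrefl:
  assumes "g10_adj u v"
  shows "u < 10" and "v < 10" and "g10_adj v u" and "u \<noteq> v"
proof -
  have check: "\<forall>u\<in>{0..<10}. \<forall>v\<in>set (g10_nbrs ! u). v < 10 \<and> v \<noteq> u \<and> u \<in> set (g10_nbrs ! v)"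
    by (simp add: g10_eval)
  show "u < 10" using assms unfolding g10_adj_def by simp
  moreover have "v \<in> set (g10_nbrs ! u)" using assms unfolding g10_adj_def by simp
  ultimately have "v < 10 \<and> v \<noteq> u \<and> u \<in> set (g10_nbrs ! v)"
    using check[rule_format, of u v] by simp
  then show "v < 10" "g10_adj v u" "u \<noteq> v"
    unfolding g10_adj_def by simp_all
qed

lemma simple_graph_g10: "simple_graph {0..<10} g10_adj"
  unfolding simple_graph_def
  using g10_adj_bounded_sym_irrefl by (metis atLeastLessThan_iff finite_atLeastLessThan zero_le)

lemma proper_colouring_g10_4: "proper_colouring {0..<10} g10_adj 4 g10_colouring4"
  unfolding proper_colouring_def
proof (intro conjI allI impI ballI)
  have "\<forall>u\<in>{0..<10}. g10_colouring4 u \<in> {1..4}"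
    by (simp add: g10_eval)
  then show "g10_colouring4 v \<in> {1..4}" if "v \<in> {0..<10}" for v
    using that by blast
  have "\<forall>u\<in>{0..<10}. \<forall>v\<in>set (g10_nbrs ! u). g10_colouring4 u \<noteq> g10_colouring4 v"
    by (simp add: g10_eval)
  then show "g10_colouring4 u \<noteq> g10_colouring4 v" if "g10_adj u v" for u v
    using that unfolding g10_adj_def by simp
qed (simp add: g10_colouring4_def)

lemma clique_g10: "clique g10_adj {0, 2, 8, 9}"
  unfolding clique_def g10_adj_def by (simp add: g10_eval)

lemma frozen_colouring_g10_5: "frozen_colouring {0..<10} g10_adj 5 g10_colouring5"
  unfolding frozen_colouring_def proper_colouring_def
proof (intro conjI allI impI ballI)
  have "\<forall>u\<in>{0..<10}. \<forall>v\<in>set (g10_nbrs ! u). g10_colouring5 u \<noteq> g10_colouring5 v"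
    by (simp add: g10_eval)
  then show "g10_colouring5 u \<noteq> g10_colouring5 v" if "g10_adj u v" for u v
    using that unfolding g10_adj_def by simp
  have "{1..5} = {1, 2, 3, 4, 5 :: nat}" by auto
  then have "\<forall>u\<in>{0..<10}. \<forall>x\<in>{1..5}. x \<noteq> g10_colouring5 u \<longrightarrow>
      (\<exists>v\<in>set (g10_nbrs ! u). g10_colouring5 v = x)"
    by (simp add: g10_eval)
  then show "\<exists>v. g10_adj u v \<and> g10_colouring5 v = x"
    if "u \<in> {0..<10}" "x \<in> {1..5}" "x \<noteq> g10_colouring5 u" for u x
    using that unfolding g10_adj_def by fastforce
qed (simp_all add: g10_colouring5_def)

lemma g10_no_induced_path5:
  assumes "g10_adj a b" "g10_adj b c" "g10_adj c d" "g10_adj d e" and "distinct [a, b, c, d, e]"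
    and "\<not> g10_adj a c" "\<not> g10_adj a d" "\<not> g10_adj a e"
    and "\<not> g10_adj b d" "\<not> g10_adj b e" "\<not> g10_adj c e"
  shows False
proof -
  let ?N = "\<lambda>u. set (g10_nbrs ! u)"
  have "\<forall>a\<in>{0..<10}. \<forall>b\<in>?N a. \<forall>c\<in>?N b. c \<noteq> a \<and> c \<notin> ?N a \<longrightarrow>
      (\<forall>d\<in>?N c. d \<noteq> b \<and> d \<notin> ?N a \<and> d \<notin> ?N b \<longrightarrow>
      (\<forall>e\<in>?N d. e \<noteq> a \<and> e \<noteq> b \<and> e \<noteq> c \<longrightarrow> e \<in> ?N a \<or> e \<in> ?N b \<or> e \<in> ?N c))"
    by (simp add: g10_eval)
  from this[rule_format, of a b c d e] show False
    using assms unfolding g10_adj_def by auto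
qed

lemma g10_path5_free: "H_free {0..<5} (path_adj 5) {0..<10} g10_adj"
  unfolding H_free_def induced_sub_iff_embedding
proof
  assume "\<exists>p. induced_embedding p {0..<5} (path_adj 5) {0..<10} g10_adj"
  then obtain p where p: "induced_embedding p {0..<5} (path_adj 5) {0..<10} g10_adj" ..
  then have adj: "g10_adj (p i) (p j) \<longleftrightarrow> path_adj 5 i j" if "i < 5" "j < 5" for i j
    using that unfolding induced_embedding_def by simp
  have "{0..<5} = {0, 1, 2, 3, 4 :: nat}" by auto
  then have "distinct [p 0, p 1, p 2, p 3, p 4]"
    using p unfolding induced_embedding_def inj_on_def by simp
  then show False
    using g10_no_induced_path5[of "p 0" "p 1" "p 2" "p 3" "p 4"]
    by (simp add: adj path_adj_def)
qed

lemma g10_not_chromatic_plus_one_mixing: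
  "\<not> k_mixing {0..<10} g10_adj (chromatic_number {0..<10} g10_adj + 1)"
proof -
  have "chromatic_number {0..<10} g10_adj = 4"
    by (rule chromatic_number_eqI[OF proper_colouring_g10_4 clique_g10]) simp_all
  moreover have "g10_colouring4 \<noteq> g10_colouring5"
    by (auto dest: fun_cong[of _ _ 1] simp: g10_colouring4_def g10_colouring5_def)
  ultimately show ?thesis
    using frozen_colouring_not_k_mixing[OF frozen_colouring_g10_5
        proper_colouring_mono[OF proper_colouring_g10_4]]
    by simp
qed

theorem lemma5:
  shows "\<not> (\<exists>(VH :: nat set) EH. simple_graph VH EH \<and> card VH = 5 \<and>
           (\<forall>(VG :: nat set) EG. simple_graph VG EG \<and> H_free VH EH VG EG
              \<longrightarrow> k_mixing VG EG (chromatic_number VG EG + 1)))"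
proof
  assume "\<exists>(VH :: nat set) EH. simple_graph VH EH \<and> card VH = 5 \<and>
           (\<forall>(VG :: nat set) EG. simple_graph VG EG \<and> H_free VH EH VG EG
              \<longrightarrow> k_mixing VG EG (chromatic_number VG EG + 1))"
  then obtain VH :: "nat set" and EH where "card VH = 5"
    and mixing: "\<And>(VG :: nat set) EG. simple_graph VG EG \<Longrightarrow> H_free VH EH VG EG
              \<Longrightarrow> k_mixing VG EG (chromatic_number VG EG + 1)"
    by blast
  have "induced_sub VH EH {0..<6} (cycle_adj 6)"
    using mixing[OF simple_graph_cycle[of 6]] cycle_not_chromatic_plus_one_mixing[of 6]
    unfolding H_free_def by auto
  then have "induced_sub {0..<5} (path_adj 5) VH EH"
    using induced_path_in_cycle_subgraph[of VH EH 5] \<open>card VH = 5\<close> by simp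
  moreover have "induced_sub VH EH {0..<10} g10_adj"
    using mixing[OF simple_graph_g10] g10_not_chromatic_plus_one_mixing
    unfolding H_free_def by blast
  ultimately show False
    using g10_path5_free induced_sub_trans unfolding H_free_def by blast
qed

end
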